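(* Let $H^2=H^2(\mathbb{D})$ be the Hardy space on the open unit disc. The differentiation operator $D:f\mapsto f'$ with domain $\mathcal{E}=\{f\in H^2: f'\in H^2\}$ is frequently hypercyclic on $H^2$.
   Context: A (possibly unbounded) densely defined operator $T$ in $X$ is frequently hypercyclic if there is $f\in D(T)$ with $T^nf\in D(T)$ for all $n\ge1$ such that for every non-empty open $U\subset X$ the set $\{n\in\mathbb{N}: T^nf\in U\}$ has positive lower density, where the lower density of $E\subset\mathbb{N}$ is $\liminf_{N\to\infty}\#(E\cap\{1,\dots,N\})/N$. *)

theory Defs
  imports "HOL-Analysis.Analysis" "HOL-Library.Liminf_Limsup"
begin

text \<open>Elements of the Hardy space are represented as functions on the complex plane
  that are holomorphic on the open unit disc and vanish outside it (so that each
  element of the space has a unique representative).\<close>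

definition taylor_coeff :: "(complex \<Rightarrow> complex) \<Rightarrow> nat \<Rightarrow> complex" where
  "taylor_coeff f n = (deriv ^^ n) f 0 / of_nat (fact n)"

definition H2 :: "(complex \<Rightarrow> complex) set" where
  "H2 = {f. f holomorphic_on ball 0 1 \<and> (\<forall>z. z \<notin> ball 0 1 \<longrightarrow> f z = 0)
            \<and> summable (\<lambda>n. (cmod (taylor_coeff f n))\<^sup>2)}"

definition h2_norm :: "(complex \<Rightarrow> complex) \<Rightarrow> real" where
  "h2_norm f = sqrt (\<Sum>n. (cmod (taylor_coeff f n))\<^sup>2)"

definition h2_dist :: "(complex \<Rightarrow> complex) \<Rightarrow> (complex \<Rightarrow> complex) \<Rightarrow> real" where
  "h2_dist f g = h2_norm (\<lambda>z. f z - g z)"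

definition h2_open :: "(complex \<Rightarrow> complex) set \<Rightarrow> bool" where
  "h2_open U \<longleftrightarrow> U \<subseteq> H2 \<and> (\<forall>x\<in>U. \<exists>e>0. \<forall>y\<in>H2. h2_dist x y < e \<longrightarrow> y \<in> U)"

definition Dop :: "(complex \<Rightarrow> complex) \<Rightarrow> (complex \<Rightarrow> complex)" where
  "Dop f = (\<lambda>z. if z \<in> ball 0 1 then deriv f z else 0)"

definition Edom :: "(complex \<Rightarrow> complex) set" where
  "Edom = {f \<in> H2. Dop f \<in> H2}"

definition lower_density :: "nat set \<Rightarrow> ereal" where
  "lower_density E = liminf (\<lambda>N. ereal (real (card (E \<inter> {1..N})) / real N))"

definition freq_hypercyclic_D_H2 :: bool where
  "freq_hypercyclic_D_H2 \<longleftrightarrow>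
     (\<exists>f. f \<in> Edom \<and> (\<forall>n\<ge>1. (Dop ^^ n) f \<in> Edom) \<and>
          (\<forall>U. h2_open U \<and> U \<noteq> {} \<longrightarrow> lower_density {n. n \<ge> 1 \<and> (Dop ^^ n) f \<in> U} > 0))"

end

theory Submission
  imports Defs "HOL-Complex_Analysis.Cauchy_Integral_Formula"
begin

text \<open>
  An element of \<open>H\<^sup>2\<close> is an \<open>\<ell>\<^sup>2\<close> sequence of Taylor coefficients, and if
  \<open>g = \<Sum> c\<^sub>p z\<^sup>p / p!\<close> then \<open>D\<^sup>m g\<close> has the coefficients \<open>c\<^sub>m\<^sub>+\<^sub>k / k!\<close>.
  We cut \<open>\<nat>\<close> into consecutive blocks, block \<open>t\<close> having a length that depends only on the
  2-adic valuation \<open>\<nu>(t+1)\<close>. The \<open>j\<close>-th polynomial \<open>b\<^sub>j\<close> with Gaussian rational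
  coefficients is written, as \<open>c = k! b\<^sub>j\<^sub>,\<^sub>k\<close>, into every block \<open>t\<close> with \<open>\<nu>(t+1) = v\<^sub>j\<close>,
  after a gap \<open>G\<^sub>j \<ge> K\<^sub>j! \<parallel>b\<^sub>j\<parallel>\<^sup>2\<close>. The gap guarantees \<open>|c\<^sub>m\<^sub>+\<^sub>k|\<^sup>2 \<le> k!\<close> whenever \<open>m\<close>
  lies before the block of \<open>m + k\<close>, so \<open>D\<^sup>m g\<close> is \<open>b\<^sub>j\<close> up to a tail of size \<open>\<Sum>\<^sub>k\<^sub>\<ge>\<^sub>K 1/k!\<close>
  when \<open>m\<close> is the start of such a block plus \<open>G\<^sub>j\<close>. The \<open>t\<close> with \<open>\<nu>(t+1) = v\<close> have
  density \<open>2\<^sup>-\<^sup>v\<^sup>-\<^sup>1\<close>, and as block lengths grow at most like \<open>(3/2)\<^sup>v\<close> the block starts grow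
  linearly, which gives positive lower density.
\<close>

section \<open>Functions on the disc given by power series\<close>

definition disc_fps :: "complex fps \<Rightarrow> complex \<Rightarrow> complex" where
  "disc_fps A z = (if z \<in> ball 0 1 then eval_fps A z else 0)"

lemma conv_radius_ge_1_if_summable_sq:
  fixes a :: "nat \<Rightarrow> complex"
  assumes "summable (\<lambda>n. (cmod (a n))\<^sup>2)"
  shows "conv_radius a \<ge> 1"
proof (rule conv_radius_geI_ex')
  fix r :: real
  assume r: "0 < r" "ereal r < 1"
  have bound: "norm (a n * of_real r ^ n) \<le> (cmod (a n))\<^sup>2 + r ^ n" for n
  proof -
    have rn: "0 \<le> r ^ n" "r ^ n \<le> 1"
      using r by (auto intro: power_le_one)
    have "norm (a n * of_real r ^ n) = cmod (a n) * r ^ n"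
      using r by (simp add: norm_mult norm_power)
    also have "\<dots> \<le> (cmod (a n))\<^sup>2 + (r ^ n)\<^sup>2"
      using sum_squares_bound[of "cmod (a n)" "r ^ n"] mult_nonneg_nonneg[OF norm_ge_zero[of "a n"] rn(1)]
      by linarith
    also have "(r ^ n)\<^sup>2 \<le> r ^ n"
      using rn by (simp add: power2_eq_square mult_left_le)
    finally show ?thesis by simp
  qed
  have "summable (\<lambda>n. (cmod (a n))\<^sup>2 + r ^ n)"
    using assms r by (intro summable_add summable_geometric) auto
  then have "summable (\<lambda>n. norm (a n * of_real r ^ n))"
    by (rule summable_comparison_test'[where N = 0]) (use bound in auto)
  then show "summable (\<lambda>n. a n * of_real r ^ n)"
    by (rule summable_norm_cancel)
qed

lemma norm_less_fps_conv_radius: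
  "fps_conv_radius A \<ge> 1 \<Longrightarrow> z \<in> ball 0 1 \<Longrightarrow> ereal (cmod z) < fps_conv_radius A"
  by (rule less_le_trans[of _ 1]) auto

lemma disc_fps_eventually_eq:
  "w \<in> ball 0 1 \<Longrightarrow> eventually (\<lambda>z. disc_fps A z = eval_fps A z) (nhds w)"
  using eventually_nhds_in_open[of "ball 0 1" w]
  by (auto simp: disc_fps_def elim!: eventually_mono)

lemma taylor_coeff_disc_fps:
  assumes "fps_conv_radius A \<ge> 1"
  shows "taylor_coeff (disc_fps A) n = fps_nth A n"
proof -
  have "(deriv ^^ n) (disc_fps A) 0 = (deriv ^^ n) (eval_fps A) 0"
    by (intro higher_deriv_cong_ev disc_fps_eventually_eq) auto
  moreover have "fps_conv_radius A > 0"
    using assms by (rule less_le_trans[rotated]) simp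
  ultimately show ?thesis
    unfolding taylor_coeff_def using fps_nth_conv_deriv[of A n] by simp
qed

lemma disc_fps_in_H2:
  assumes "fps_conv_radius A \<ge> 1" and "summable (\<lambda>n. (cmod (fps_nth A n))\<^sup>2)"
  shows "disc_fps A \<in> H2"
proof -
  have "eval_fps A holomorphic_on ball 0 1"
    using assms(1) by (intro holomorphic_on_eval_fps) (metis ball_eball_mono one_ereal_def)
  then have "disc_fps A holomorphic_on ball 0 1"
    by (rule holomorphic_transform) (simp add: disc_fps_def)
  then show ?thesis
    using assms taylor_coeff_disc_fps[OF assms(1)] by (simp add: H2_def disc_fps_def)
qed

lemma Dop_disc_fps:
  assumes "fps_conv_radius A \<ge> 1"
  shows "Dop (disc_fps A) = disc_fps (fps_deriv A)"
proof
  fix z :: complex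
  show "Dop (disc_fps A) z = disc_fps (fps_deriv A) z"
  proof (cases "z \<in> ball 0 1")
    case True
    have "deriv (disc_fps A) z = deriv (eval_fps A) z"
      by (intro deriv_cong_ev disc_fps_eventually_eq True refl)
    also have "\<dots> = eval_fps (fps_deriv A) z"
      using norm_less_fps_conv_radius[OF assms True] by (rule eval_fps_deriv[symmetric])
    finally show ?thesis
      using True by (simp add: Dop_def disc_fps_def)
  qed (simp add: Dop_def disc_fps_def)
qed

lemma H2_eq_disc_fps:
  assumes "f \<in> H2"
  shows "f = disc_fps (Abs_fps (taylor_coeff f))"
proof
  fix w :: complex
  show "f w = disc_fps (Abs_fps (taylor_coeff f)) w"
  proof (cases "w \<in> ball 0 1")
    case True
    have radius: "fps_conv_radius (Abs_fps (taylor_coeff f)) \<ge> 1"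
      using assms conv_radius_ge_1_if_summable_sq[of "taylor_coeff f"]
      by (simp add: H2_def fps_conv_radius_def)
    have "(\<lambda>n. taylor_coeff f n * w ^ n) sums f w"
      using holomorphic_power_series[of f 0 1 w] assms True
      by (simp add: H2_def taylor_coeff_def)
    moreover have "(\<lambda>n. taylor_coeff f n * w ^ n) sums eval_fps (Abs_fps (taylor_coeff f)) w"
      using sums_eval_fps[OF norm_less_fps_conv_radius[OF radius True]] by simp
    ultimately show ?thesis
      using True sums_unique2 by (auto simp: disc_fps_def)
  next
    case False
    then show ?thesis
      using assms by (simp add: disc_fps_def H2_def)
  qed
qed

lemma h2_dist_disc_fps:
  assumes "f \<in> H2" and "fps_conv_radius B \<ge> 1"
  shows "h2_dist f (disc_fps B) = sqrt (\<Sum>n. (cmod (taylor_coeff f n - fps_nth B n))\<^sup>2)"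
proof -
  define A where "A = Abs_fps (taylor_coeff f)"
  have radius_A: "fps_conv_radius A \<ge> 1"
    using assms(1) conv_radius_ge_1_if_summable_sq[of "taylor_coeff f"]
    by (simp add: A_def H2_def fps_conv_radius_def)
  have radius_diff: "fps_conv_radius (A - B) \<ge> 1"
    using fps_conv_radius_diff[of A B] radius_A assms(2) by (simp add: min_def split: if_splits)
  have "(\<lambda>z. f z - disc_fps B z) = disc_fps (A - B)"
  proof
    fix z
    have "f z = disc_fps A z"
      using H2_eq_disc_fps[OF assms(1)] by (simp add: A_def)
    then show "f z - disc_fps B z = disc_fps (A - B) z"
      using norm_less_fps_conv_radius[OF radius_A, of z] norm_less_fps_conv_radius[OF assms(2), of z]
      by (auto simp: disc_fps_def intro!: eval_fps_diff[symmetric])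
  qed
  then show ?thesis
    unfolding h2_dist_def h2_norm_def using taylor_coeff_disc_fps[OF radius_diff]
    by (simp add: A_def)
qed

text \<open>\<open>shifted_egf c m\<close> is the \<open>m\<close>-th derivative of \<open>\<Sum> c\<^sub>p z\<^sup>p / p!\<close>.\<close>

definition shifted_egf :: "(nat \<Rightarrow> complex) \<Rightarrow> nat \<Rightarrow> complex fps" where
  "shifted_egf c m = Abs_fps (\<lambda>k. c (m + k) / fact k)"

lemma fps_deriv_shifted_egf: "fps_deriv (shifted_egf c m) = shifted_egf c (Suc m)"
proof (rule fps_ext)
  fix n
  have "fps_nth (fps_deriv (shifted_egf c m)) n = of_nat (Suc n) * (c (m + Suc n) / fact (Suc n))"
    by (simp add: fps_deriv_def shifted_egf_def)
  also have "\<dots> = c (Suc m + n) / fact n"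
    by (simp add: field_simps del: of_nat_Suc)
  finally show "fps_nth (fps_deriv (shifted_egf c m)) n = fps_nth (shifted_egf c (Suc m)) n"
    by (simp add: shifted_egf_def)
qed

context
  fixes c :: "nat \<Rightarrow> complex"
  assumes summable_shifted: "\<And>m. summable (\<lambda>k. (cmod (c (m + k) / fact k))\<^sup>2)"
begin

lemma fps_conv_radius_shifted_egf: "fps_conv_radius (shifted_egf c m) \<ge> 1"
  using conv_radius_ge_1_if_summable_sq[OF summable_shifted[of m]]
  by (simp add: fps_conv_radius_def shifted_egf_def)

lemma disc_shifted_egf_in_Edom: "disc_fps (shifted_egf c m) \<in> Edom"
proof -
  have "disc_fps (shifted_egf c n) \<in> H2" for n
    using disc_fps_in_H2[OF fps_conv_radius_shifted_egf] summable_shifted[of n]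
    by (simp add: shifted_egf_def)
  then show ?thesis
    by (simp add: Edom_def Dop_disc_fps[OF fps_conv_radius_shifted_egf] fps_deriv_shifted_egf)
qed

lemma Dop_power_disc_shifted_egf:
  "(Dop ^^ n) (disc_fps (shifted_egf c 0)) = disc_fps (shifted_egf c n)"
  by (induction n) (simp_all add: Dop_disc_fps[OF fps_conv_radius_shifted_egf] fps_deriv_shifted_egf)

end

lemma sum_sq_diff_le_head_tail:
  fixes a b :: "nat \<Rightarrow> complex"
  assumes a: "summable (\<lambda>k. (cmod (a k))\<^sup>2)"
    and b: "\<And>k. K \<le> k \<Longrightarrow> (cmod (b k))\<^sup>2 \<le> 2 * (1/2) ^ k"
  shows "(\<Sum>k. (cmod (a k - b k))\<^sup>2)
           \<le> (\<Sum>k<K. (cmod (a k - b k))\<^sup>2) + 2 * (\<Sum>k. (cmod (a (k + K)))\<^sup>2) + 8 * (1/2) ^ K"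
proof -
  define d where "d k = (cmod (a k - b k))\<^sup>2" for k
  have diff_sq: "d k \<le> 2 * (cmod (a k))\<^sup>2 + 2 * (cmod (b k))\<^sup>2" for k
  proof -
    have "d k \<le> (cmod (a k) + cmod (b k))\<^sup>2"
      unfolding d_def by (intro power_mono norm_triangle_ineq4) auto
    then show ?thesis
      using sum_squares_bound[of "cmod (a k)" "cmod (b k)"] by (simp add: power2_sum)
  qed
  have a_tail: "summable (\<lambda>k. 2 * (cmod (a (k + K)))\<^sup>2)"
    using summable_ignore_initial_segment[OF a, of K] by (rule summable_mult)
  have geom: "(\<lambda>k. 2 * (2 * (1/2::real) ^ (k + K))) sums (8 * (1/2) ^ K)"
    using sums_mult[OF geometric_sums[of "1/2::real"], of "4 * (1/2) ^ K"]
    by (simp add: power_add mult_ac)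
  have tail_le: "d (k + K) \<le> 2 * (cmod (a (k + K)))\<^sup>2 + 2 * (2 * (1/2) ^ (k + K))" for k
    using diff_sq[of "k + K"] b[of "k + K"] by simp
  have d_tail: "summable (\<lambda>k. d (k + K))"
    using tail_le
    by (intro summable_comparison_test'[where N = 0, OF summable_add[OF a_tail sums_summable[OF geom]]])
      (auto simp: d_def)
  have "(\<Sum>k. d (k + K)) \<le> (\<Sum>k. 2 * (cmod (a (k + K)))\<^sup>2 + 2 * (2 * (1/2) ^ (k + K)))"
    using tail_le d_tail a_tail sums_summable[OF geom] by (intro suminf_le summable_add) auto
  also have "\<dots> = 2 * (\<Sum>k. (cmod (a (k + K)))\<^sup>2) + 8 * (1/2) ^ K"
    using suminf_add[OF a_tail sums_summable[OF geom]] sums_unique[OF geom]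
      suminf_mult[OF summable_ignore_initial_segment[OF a, of K], of 2]
    by simp
  finally have "(\<Sum>k. d (k + K)) \<le> 2 * (\<Sum>k. (cmod (a (k + K)))\<^sup>2) + 8 * (1/2) ^ K" .
  moreover have "(\<Sum>k. d k) = (\<Sum>k. d (k + K)) + (\<Sum>k<K. d k)"
    using summable_iff_shift[of d K] d_tail by (intro suminf_split_initial_segment) simp
  ultimately show ?thesis
    by (simp add: d_def)
qed

section \<open>Sums along the ruler sequence\<close>

lemma multiplicity_2_odd: "multiplicity 2 (Suc (2 * T)) = 0"
  by (rule not_dvd_imp_multiplicity_0) presburger

lemma multiplicity_2_double: "multiplicity 2 (Suc (Suc (2 * T))) = Suc (multiplicity 2 (Suc T))"
  using multiplicity_times_same[of "Suc T" "2::nat"] by simp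

lemma multiplicity_2_power_times_odd: "multiplicity 2 (2 ^ v * (2 * s + 1 :: nat)) = v"
proof -
  have "multiplicity (2::nat) ((2 * s + 1) * 2 ^ v) = multiplicity 2 ((2::nat) ^ v)"
    by (rule multiplicity_prime_elem_times_other) auto
  then show ?thesis
    by (simp add: multiplicity_same_power mult.commute)
qed

lemma sum_ruler_double:
  fixes h :: "nat \<Rightarrow> real"
  shows "(\<Sum>s<2 * T. h (multiplicity 2 (Suc s)))
           = T * h 0 + (\<Sum>s<T. h (Suc (multiplicity 2 (Suc s))))"
proof (induction T)
  case (Suc T)
  have "(\<Sum>s<2 * Suc T. h (multiplicity 2 (Suc s)))
          = (\<Sum>s<2 * T. h (multiplicity 2 (Suc s)))
            + h (multiplicity 2 (Suc (2 * T))) + h (multiplicity 2 (Suc (Suc (2 * T))))"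
    by simp
  then show ?case
    using Suc by (simp add: multiplicity_2_odd multiplicity_2_double distrib_right)
qed simp

text \<open>
  Half of the terms are \<open>h 0\<close> and the rest is the same sum for \<open>h \<circ> Suc\<close> up to \<open>T/2\<close>;
  the growth rate \<open>3/2 < 2\<close> makes this recursion close with the constant \<open>4\<close>.
\<close>

lemma sum_ruler_le:
  fixes h :: "nat \<Rightarrow> real"
  assumes "\<And>v. 0 \<le> h v" and "\<And>v. h v \<le> M * (3/2) ^ v"
  shows "(\<Sum>s<T. h (multiplicity 2 (Suc s))) \<le> 4 * M * T"
  using assms
proof (induction T arbitrary: h M rule: less_induct)
  case (less T)
  show ?case
  proof (cases "T = 0")
    case False
    define T' where "T' = T div 2"
    have M: "0 \<le> M" "h 0 \<le> M"
      using less.prems[of 0] by auto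
    have h_Suc: "h (Suc v) \<le> 3/2 * M * (3/2) ^ v" for v
      using less.prems(2)[of "Suc v"] by (simp add: mult_ac)
    have IH: "(\<Sum>s<T'. h (Suc (multiplicity 2 (Suc s)))) \<le> 4 * (3/2 * M) * T'"
      using less.IH[of T' "\<lambda>v. h (Suc v)" "3/2 * M"] less.prems(1) h_Suc False
      by (simp add: T'_def)
    have T: "T = 2 * T' + T mod 2"
      by (simp add: T'_def)
    then have T_real: "real T = 2 * real T' + real (T mod 2)"
      by (metis of_nat_add of_nat_mult of_nat_numeral)
    have "(\<Sum>s<T. h (multiplicity 2 (Suc s)))
            = (\<Sum>s<2 * T'. h (multiplicity 2 (Suc s))) + (T mod 2) * h 0"
      by (subst T, cases "T mod 2 = 0") (auto simp: multiplicity_2_odd mod2_eq_if)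
    also have "\<dots> = T' * h 0 + (\<Sum>s<T'. h (Suc (multiplicity 2 (Suc s)))) + (T mod 2) * h 0"
      by (simp add: sum_ruler_double)
    also have "\<dots> \<le> T' * M + 6 * M * T' + (T mod 2) * M"
      using IH M by (intro add_mono mult_left_mono) auto
    also have "\<dots> \<le> 4 * M * T"
      using M(1) mult_nonneg_nonneg[OF M(1), of "real T'"] mult_nonneg_nonneg[OF M(1), of "real (T mod 2)"]
      by (simp add: T_real algebra_simps)
    finally show ?thesis .
  qed simp
qed

section \<open>The schedule of test polynomials\<close>

text \<open>Every finite list of Gaussian rationals occurs as some \<open>test_list j\<close>.\<close>

definition test_list :: "nat \<Rightarrow> (rat \<times> rat) list" where
  "test_list j = from_nat j"

definition test_len :: "nat \<Rightarrow> nat" where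
  "test_len j = length (test_list j)"

definition test_coeff :: "nat \<Rightarrow> nat \<Rightarrow> complex" where
  "test_coeff j k = (if k < test_len j
     then Complex (of_rat (fst (test_list j ! k))) (of_rat (snd (test_list j ! k))) else 0)"

definition coeff_mass :: "nat \<Rightarrow> nat" where
  "coeff_mass j = nat \<lceil>\<Sum>k<test_len j. (cmod (test_coeff j k))\<^sup>2\<rceil>"

text \<open>Chosen so that \<open>(k! |test_coeff j k|)\<^sup>2 \<le> k! (n - k)! \<le> n!\<close> whenever \<open>gap j + k \<le> n\<close>.\<close>

definition gap :: "nat \<Rightarrow> nat" where
  "gap j = fact (test_len j) * coeff_mass j + 1"

definition block_len :: "nat \<Rightarrow> nat" where
  "block_len j = gap j + test_len j"

text \<open>Large enough that \<open>block_len j \<le> (3/2) ^ slot_val j\<close>.\<close>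

definition slot_val :: "nat \<Rightarrow> nat" where
  "slot_val j = 2 * (j + (\<Sum>i\<le>j. block_len i))"

definition ruler_len :: "nat \<Rightarrow> nat" where
  "ruler_len v = (if v \<in> range slot_val then block_len (inv slot_val v) else 1)"

definition block_start :: "nat \<Rightarrow> nat" where
  "block_start t = (\<Sum>s<t. ruler_len (multiplicity 2 (Suc s)))"

definition carries :: "nat \<Rightarrow> nat \<Rightarrow> nat \<Rightarrow> nat \<Rightarrow> bool" where
  "carries t j k p \<longleftrightarrow>
     multiplicity 2 (Suc t) = slot_val j \<and> k < test_len j \<and> p = block_start t + gap j + k"

definition hc_coeff :: "nat \<Rightarrow> complex" where
  "hc_coeff p = (if \<exists>t j k. carries t j k p
     then THE c. \<exists>t j k. carries t j k p \<and> c = fact k * test_coeff j k else 0)"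

lemma gaussian_rat_approx:
  assumes "d > 0"
  shows "\<exists>q :: rat \<times> rat. cmod (z - Complex (of_rat (fst q)) (of_rat (snd q))) < d"
proof -
  have "\<exists>x :: rat. \<bar>y - of_rat x\<bar> < d / 2" for y
  proof -
    obtain r where "r \<in> \<rat>" "y - d / 2 < r" "r < y"
      using Rats_dense_in_real[of "y - d / 2" y] assms by auto
    then show ?thesis
      by (metis Rats_cases abs_of_pos diff_gt_0_iff_gt diff_less_eq add.commute)
  qed
  then obtain x y :: rat where "\<bar>Re z - of_rat x\<bar> < d / 2" "\<bar>Im z - of_rat y\<bar> < d / 2"
    by meson
  then have "cmod (z - Complex (of_rat x) (of_rat y)) < d"
    using cmod_le[of "z - Complex (of_rat x) (of_rat y)"] by simp
  then show ?thesis
    by auto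
qed

lemma test_coeff_approx:
  assumes "\<delta> > 0"
  shows "\<exists>j. test_len j = K \<and> (\<Sum>k<K. (cmod (a k - test_coeff j k))\<^sup>2) < \<delta>"
proof -
  define d where "d = sqrt (\<delta> / (K + 1))"
  have "d > 0"
    using assms by (simp add: d_def)
  then have approx: "\<forall>k. \<exists>q :: rat \<times> rat. cmod (a k - Complex (of_rat (fst q)) (of_rat (snd q))) < d"
    using gaussian_rat_approx by blast
  obtain q :: "nat \<Rightarrow> rat \<times> rat"
    where q: "\<And>k. cmod (a k - Complex (of_rat (fst (q k))) (of_rat (snd (q k)))) < d"
    using choice[OF approx] by blast
  define j where "j = to_nat (map q [0..<K])"
  have list: "test_list j = map q [0..<K]"
    by (simp add: test_list_def j_def)
  have "(\<Sum>k<K. (cmod (a k - test_coeff j k))\<^sup>2) \<le> (\<Sum>k<K. d\<^sup>2)"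
    using q \<open>d > 0\<close>
    by (intro sum_mono power_mono) (auto simp: test_coeff_def test_len_def list less_imp_le)
  also have "\<dots> = K * (\<delta> / (K + 1))"
    using assms by (simp add: d_def)
  also have "\<dots> < \<delta>"
    using assms by (simp add: field_simps)
  finally show ?thesis
    by (intro exI[of _ j]) (simp add: test_len_def list)
qed

lemma slot_val_strict_mono: "strict_mono slot_val"
  by (rule strict_monoI_Suc) (simp add: slot_val_def)

lemma ruler_len_slot_val: "ruler_len (slot_val j) = block_len j"
  using strict_mono_imp_inj_on[OF slot_val_strict_mono]
  by (simp add: ruler_len_def inv_f_f)

lemma ruler_len_pos: "ruler_len v \<ge> 1"
  by (simp add: ruler_len_def block_len_def gap_def)

lemma ruler_len_le: "real (ruler_len v) \<le> (3/2) ^ v"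
proof (cases "v \<in> range slot_val")
  case True
  then obtain j where v: "v = slot_val j"
    by auto
  define Y where "Y = j + (\<Sum>i\<le>j. block_len i)"
  have "block_len j \<le> Y"
    using member_le_sum[of j "{..j}" block_len] by (simp add: Y_def)
  also have "Y < 2 ^ Y"
    by (rule less_exp)
  finally have "real (block_len j) \<le> 2 ^ Y"
    by (metis less_imp_le of_nat_le_iff of_nat_numeral of_nat_power)
  also have "(2::real) ^ Y \<le> (9/4) ^ Y"
    by (rule power_mono) auto
  also have "slot_val j = 2 * Y"
    by (simp add: slot_val_def Y_def)
  then have "(9/4::real) ^ Y = (3/2) ^ slot_val j"
    by (simp add: power_mult power2_eq_square)
  finally show ?thesis
    by (simp add: v ruler_len_slot_val)
next
  case False
  then show ?thesis
    by (simp add: ruler_len_def)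
qed

lemma block_start_Suc: "block_start (Suc t) = block_start t + ruler_len (multiplicity 2 (Suc t))"
  by (simp add: block_start_def)

lemma block_start_strict_mono: "strict_mono block_start"
  by (rule strict_monoI_Suc) (simp add: block_start_Suc ruler_len_pos less_le_trans[OF _ ruler_len_pos])

lemma block_start_mono: "s \<le> t \<Longrightarrow> block_start s \<le> block_start t"
  by (simp add: strict_mono_less_eq[OF block_start_strict_mono])

lemma block_start_ge: "t \<le> block_start t"
proof (induction t)
  case (Suc t)
  then show ?case
    using ruler_len_pos[of "multiplicity 2 (Suc t)"] by (simp add: block_start_Suc)
qed (simp add: block_start_def)

lemma block_index_le:
  assumes "block_start s \<le> p" and "p < block_start (Suc t)"
  shows "s \<le> t"
proof (rule ccontr)
  assume "\<not> s \<le> t"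
  then have "block_start (Suc t) \<le> block_start s"
    by (simp add: block_start_mono)
  then show False
    using assms by linarith
qed

lemma block_start_le: "block_start t \<le> 4 * t"
proof -
  have "real (block_start t) \<le> 4 * 1 * real t"
    unfolding block_start_def of_nat_sum
    by (rule sum_ruler_le) (simp_all add: ruler_len_le)
  then show ?thesis
    by linarith
qed

lemma carries_bounds: "carries t j k p \<Longrightarrow> block_start t \<le> p \<and> p < block_start (Suc t)"
  by (auto simp: carries_def block_start_Suc ruler_len_slot_val block_len_def)

lemma carries_unique:
  assumes "carries t j k p" and "carries t' j' k' p"
  shows "t = t' \<and> j = j' \<and> k = k'"
proof -
  have "t = t'"
    using carries_bounds[OF assms(1)] carries_bounds[OF assms(2)]
    by (meson block_index_le order.antisym)
  moreover have "j = j'"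
    using assms \<open>t = t'\<close> strict_mono_eq[OF slot_val_strict_mono]
    by (simp add: carries_def)
  ultimately show ?thesis
    using assms by (simp add: carries_def)
qed

lemma hc_coeff_carries: "carries t j k p \<Longrightarrow> hc_coeff p = fact k * test_coeff j k"
  unfolding hc_coeff_def by (auto intro!: the_equality dest: carries_unique)

lemma test_coeff_sq_le_mass: "(cmod (test_coeff j k))\<^sup>2 \<le> coeff_mass j"
proof (cases "k < test_len j")
  case True
  then have "(cmod (test_coeff j k))\<^sup>2 \<le> (\<Sum>i<test_len j. (cmod (test_coeff j i))\<^sup>2)"
    by (intro member_le_sum) auto
  also have "\<dots> \<le> coeff_mass j"
    unfolding coeff_mass_def by (rule real_nat_ceiling_ge)
  finally show ?thesis .
qed (simp add: test_coeff_def)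

lemma fact_mult_fact_le: "k \<le> n \<Longrightarrow> fact k * fact (n - k) \<le> (fact n :: real)"
  using fact_fact_dvd_fact[of k "n - k"] dvd_imp_le[of "fact k * fact (n - k)" "fact n :: nat"]
  by (metis le_add_diff_inverse fact_gt_zero of_nat_fact of_nat_le_iff of_nat_mult)

lemma hc_coeff_sq_le_fact:
  assumes "carries t j k p" and "m \<le> block_start t" and "p = m + n"
  shows "(cmod (hc_coeff p))\<^sup>2 \<le> fact n"
proof -
  have k: "k < test_len j" and n: "gap j + k \<le> n"
    using assms by (auto simp: carries_def)
  have "(cmod (hc_coeff p))\<^sup>2 = fact k * (fact k * (cmod (test_coeff j k))\<^sup>2)"
    by (simp add: hc_coeff_carries[OF assms(1)] norm_mult power2_eq_square)
  also have "\<dots> \<le> fact k * (fact (test_len j) * real (coeff_mass j))"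
    using k test_coeff_sq_le_mass[of j k]
    by (intro mult_left_mono mult_mono fact_mono) auto
  also have "\<dots> \<le> fact k * fact (n - k)"
  proof -
    have "fact (test_len j) * coeff_mass j \<le> (fact (n - k) :: nat)"
      using n fact_ge_self[of "n - k"] unfolding gap_def by linarith
    then have "fact (test_len j) * real (coeff_mass j) \<le> fact (n - k)"
      by (metis of_nat_fact of_nat_le_iff of_nat_mult)
    then show ?thesis
      by (simp add: mult_left_mono)
  qed
  also have "\<dots> \<le> fact n"
    using n by (intro fact_mult_fact_le) simp
  finally show ?thesis .
qed

lemma inverse_fact_le: "1 / fact n \<le> 2 * (1/2::real) ^ n"
proof -
  have "(2::real) ^ n \<le> 2 * fact n"
  proof (induction n)
    case (Suc n)
    show ?case
    proof (cases "n = 0")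
      case False
      have "(2::real) ^ Suc n \<le> 2 * (2 * fact n)"
        using Suc by simp
      also have "\<dots> \<le> 2 * (real (Suc n) * fact n)"
        using False by (intro mult_left_mono mult_right_mono) auto
      finally show ?thesis
        by simp
    qed simp
  qed simp
  then show ?thesis
    by (simp add: field_simps power_one_over)
qed

lemma hc_coeff_tail_bound:
  assumes "m \<le> block_start s" and "block_start s \<le> m + k"
  shows "(cmod (hc_coeff (m + k) / fact k))\<^sup>2 \<le> 2 * (1/2) ^ k"
proof (cases "\<exists>t j i. carries t j i (m + k)")
  case True
  then obtain t j i where c: "carries t j i (m + k)"
    by blast
  have "s \<le> t"
    using carries_bounds[OF c] assms(2) by (auto intro: block_index_le)
  then have "m \<le> block_start t"
    using assms(1) block_start_mono by (meson order.trans)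
  then have "(cmod (hc_coeff (m + k)))\<^sup>2 \<le> fact k"
    using hc_coeff_sq_le_fact[OF c] by simp
  then have "(cmod (hc_coeff (m + k) / fact k))\<^sup>2 \<le> fact k / (fact k)\<^sup>2"
    by (simp add: norm_divide power_divide divide_right_mono)
  also have "\<dots> = 1 / fact k"
    by (simp add: power2_eq_square)
  finally show ?thesis
    using inverse_fact_le[of k] by linarith
next
  case False
  then show ?thesis
    by (simp add: hc_coeff_def)
qed

lemma summable_hc_coeff_shifted: "summable (\<lambda>k. (cmod (hc_coeff (m + k) / fact k))\<^sup>2)"
proof (rule summable_comparison_test'[where N = "block_start (Suc m)"])
  show "summable (\<lambda>k. 2 * (1/2::real) ^ k)"
    by (intro summable_mult summable_geometric) auto
  fix k
  assume "block_start (Suc m) \<le> k"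
  moreover have "m \<le> block_start (Suc m)"
    using block_start_ge[of "Suc m"] by simp
  ultimately show "norm ((cmod (hc_coeff (m + k) / fact k))\<^sup>2) \<le> 2 * (1/2) ^ k"
    using hc_coeff_tail_bound[of m "Suc m" k] by simp
qed

lemma sum_sq_diff_hc_coeff_shifted_le:
  assumes a: "summable (\<lambda>k. (cmod (a k))\<^sup>2)" and t: "multiplicity 2 (Suc t) = slot_val j"
  defines "K \<equiv> test_len j"
  shows "(\<Sum>k. (cmod (a k - hc_coeff (block_start t + gap j + k) / fact k))\<^sup>2)
           \<le> (\<Sum>k<K. (cmod (a k - test_coeff j k))\<^sup>2) + 2 * (\<Sum>k. (cmod (a (k + K)))\<^sup>2)
             + 8 * (1/2) ^ K"
proof -
  define m where "m = block_start t + gap j"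
  define b where "b k = hc_coeff (m + k) / fact k" for k
  have head: "b k = test_coeff j k" if "k < K" for k
    using hc_coeff_carries[of t j k] t that by (simp add: b_def m_def carries_def K_def)
  have tail: "(cmod (b k))\<^sup>2 \<le> 2 * (1/2) ^ k" if "K \<le> k" for k
    using hc_coeff_tail_bound[of m "Suc t" k] that t
    by (simp add: b_def m_def K_def block_start_Suc ruler_len_slot_val block_len_def)
  have "(\<Sum>k. (cmod (a k - b k))\<^sup>2)
          \<le> (\<Sum>k<K. (cmod (a k - b k))\<^sup>2) + 2 * (\<Sum>k. (cmod (a (k + K)))\<^sup>2) + 8 * (1/2) ^ K"
    by (intro sum_sq_diff_le_head_tail a tail)
  then show ?thesis
    using head by (simp add: b_def m_def)
qed

lemma hc_orbit_approx:
  assumes "x \<in> H2" and "e > 0"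
  obtains j where "\<And>t. multiplicity 2 (Suc t) = slot_val j \<Longrightarrow>
    h2_dist x (disc_fps (shifted_egf hc_coeff (block_start t + gap j))) < e"
proof -
  define a where "a = taylor_coeff x"
  have a: "summable (\<lambda>k. (cmod (a k))\<^sup>2)"
    using assms(1) by (simp add: a_def H2_def)
  have "0 < e\<^sup>2 / 8"
    using assms(2) by simp
  then obtain K1 where "\<forall>K\<ge>K1. norm (\<Sum>k. (cmod (a (k + K)))\<^sup>2) < e\<^sup>2 / 8"
    using suminf_exist_split[OF _ a] by blast
  then have K1: "(\<Sum>k. (cmod (a (k + K)))\<^sup>2) < e\<^sup>2 / 8" if "K \<ge> K1" for K
    using that abs_ge_self by fastforce
  obtain K2 where K2: "(1/2::real) ^ K2 < e\<^sup>2 / 16"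
    using real_arch_pow_inv[of "e\<^sup>2 / 16" "1/2"] assms(2) by auto
  define K where "K = max K1 K2"
  have K_ge: "K1 \<le> K"
    by (simp add: K_def)
  have "(1/2::real) ^ K \<le> (1/2) ^ K2"
    by (intro power_decreasing) (auto simp: K_def)
  then have geom: "8 * (1/2::real) ^ K < e\<^sup>2 / 2"
    using K2 by linarith
  obtain j where j: "test_len j = K" and head: "(\<Sum>k<K. (cmod (a k - test_coeff j k))\<^sup>2) < e\<^sup>2 / 8"
    using test_coeff_approx[of "e\<^sup>2 / 8"] assms(2) by auto
  show ?thesis
  proof
    fix t
    assume t: "multiplicity 2 (Suc t) = slot_val j"
    define m where "m = block_start t + gap j"
    have "(\<Sum>k. (cmod (a k - hc_coeff (m + k) / fact k))\<^sup>2) < e\<^sup>2"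
      using sum_sq_diff_hc_coeff_shifted_le[OF a t, unfolded j] head K1[OF K_ge] geom zero_le_power2[of e]
      unfolding m_def by linarith
    then have "sqrt (\<Sum>k. (cmod (a k - hc_coeff (m + k) / fact k))\<^sup>2) < e"
      using assms(2) real_sqrt_less_mono by fastforce
    then show "h2_dist x (disc_fps (shifted_egf hc_coeff (block_start t + gap j))) < e"
      using h2_dist_disc_fps[OF assms(1) fps_conv_radius_shifted_egf[OF summable_hc_coeff_shifted]]
      by (simp add: a_def m_def shifted_egf_def)
  qed
qed

section \<open>Lower density\<close>

lemma card_ge_if_linear_enum:
  fixes m :: "nat \<Rightarrow> nat"
  assumes "strict_mono m" and "\<And>s. m s \<in> S" and "\<And>s. 1 \<le> m s"
    and "\<And>s. m s \<le> c * s + d" and "0 < c" and "2 * (c + d) \<le> N"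
  shows "N \<le> 2 * c * card (S \<inter> {1..N})"
proof -
  define q where "q = (N - d) div c"
  have "m ` {..<q} \<subseteq> S \<inter> {1..N}"
  proof
    fix x
    assume "x \<in> m ` {..<q}"
    then obtain s where "s < q" "x = m s"
      by auto
    then have "c * s + c \<le> c * q"
      by (metis add.commute mult_Suc_right mult_le_mono2 Suc_leI)
    moreover have "c * q \<le> N - d"
      by (simp add: q_def)
    ultimately have "m s \<le> N"
      using assms(4)[of s] assms(5) by arith
    then show "x \<in> S \<inter> {1..N}"
      using assms(2,3)[of s] \<open>x = m s\<close> by auto
  qed
  then have "q \<le> card (S \<inter> {1..N})"
    using card_mono[of "S \<inter> {1..N}" "m ` {..<q}"]
      card_image[OF strict_mono_imp_inj_on[OF assms(1)], of "{..<q}"]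
    by simp
  moreover have "N \<le> 2 * (c * q)"
  proof -
    have "c * q + (N - d) mod c = N - d"
      by (simp add: q_def mult_div_mod_eq)
    then have "N = c * q + (N - d) mod c + d"
      using assms(6) by simp
    then show ?thesis
      using mod_less_divisor[OF assms(5), of "N - d"] assms(6) by simp
  qed
  ultimately show ?thesis
    by (metis le_trans mult.assoc mult_le_mono2)
qed

lemma lower_density_pos_if_linear_enum:
  fixes m :: "nat \<Rightarrow> nat"
  assumes "strict_mono m" and "\<And>s. m s \<in> S" and "\<And>s. 1 \<le> m s"
    and "\<And>s. m s \<le> c * s + d" and "0 < c"
  shows "lower_density S > 0"
proof -
  have "1 / (2 * c) \<le> real (card (S \<inter> {1..N})) / N" if N: "2 * (c + d) \<le> N" for N
  proof -
    have "real N \<le> 2 * c * card (S \<inter> {1..N})"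
      using card_ge_if_linear_enum[OF assms N] by (metis of_nat_le_iff of_nat_mult of_nat_numeral)
    then show ?thesis
      using N assms(5) by (simp add: field_simps)
  qed
  then have "ereal (1 / (2 * c)) \<le> lower_density S"
    unfolding lower_density_def by (intro Liminf_bounded eventually_sequentiallyI) auto
  moreover have "ereal (1 / (2 * c)) > 0"
    using assms(5) by simp
  ultimately show ?thesis
    by order
qed

lemma lower_density_pos_ruler_blocks:
  assumes "\<And>t. multiplicity 2 (Suc t) = v \<Longrightarrow> block_start t + G \<in> S" and "1 \<le> G"
  shows "lower_density S > 0"
proof -
  define t where "t s = 2 ^ v * (2 * s + 1) - 1" for s :: nat
  have Suc_t: "Suc (t s) = 2 ^ v * (2 * s + 1)" for s
    by (simp add: t_def)
  have "strict_mono t"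
  proof (rule strict_monoI_Suc)
    fix s
    have "Suc (t s) < Suc (t (Suc s))"
      unfolding Suc_t by simp
    then show "t s < t (Suc s)"
      by simp
  qed
  show ?thesis
  proof (rule lower_density_pos_if_linear_enum)
    show "strict_mono (\<lambda>s. block_start (t s) + G)"
      using strict_mono_o[OF block_start_strict_mono \<open>strict_mono t\<close>]
      by (simp add: strict_mono_def)
    show "block_start (t s) + G \<in> S" for s
      using assms(1) Suc_t[of s] multiplicity_2_power_times_odd[of v s] by metis
    show "block_start (t s) + G \<le> (8 * 2 ^ v) * s + (4 * 2 ^ v + G)" for s
      using block_start_le[of "t s"] Suc_t[of s] by (simp add: algebra_simps)
  qed (use assms(2) in auto)
qed

theorem mainTheorem6:
  shows "freq_hypercyclic_D_H2"
proof -
  define g where "g = disc_fps (shifted_egf hc_coeff 0)"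
  have orbit: "(Dop ^^ n) g = disc_fps (shifted_egf hc_coeff n)" for n
    unfolding g_def using summable_hc_coeff_shifted by (rule Dop_power_disc_shifted_egf)
  have Edom: "disc_fps (shifted_egf hc_coeff n) \<in> Edom" for n
    using summable_hc_coeff_shifted by (rule disc_shifted_egf_in_Edom)
  have "lower_density {n. n \<ge> 1 \<and> (Dop ^^ n) g \<in> U} > 0" if U: "h2_open U" "U \<noteq> {}" for U
  proof -
    obtain x e where x: "x \<in> H2" "e > 0" and ball: "\<And>y. y \<in> H2 \<Longrightarrow> h2_dist x y < e \<Longrightarrow> y \<in> U"
      using U unfolding h2_open_def by blast
    obtain j where j: "\<And>t. multiplicity 2 (Suc t) = slot_val j \<Longrightarrow>
        h2_dist x (disc_fps (shifted_egf hc_coeff (block_start t + gap j))) < e"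
      using hc_orbit_approx[OF x] by blast
    show ?thesis
      by (rule lower_density_pos_ruler_blocks[of "slot_val j" "gap j"])
        (use j ball Edom in \<open>auto simp: orbit Edom_def gap_def\<close>)
  qed
  moreover have "(Dop ^^ n) g \<in> Edom" for n
    using orbit Edom by simp
  moreover have "g \<in> Edom"
    using Edom by (simp add: g_def)
  ultimately show ?thesis
    unfolding freq_hypercyclic_D_H2_def by blast
qed

end
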